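(* Let $q$ be a prime power and let $1\le t_1<\cdots<t_r<n$ be divisors of $n$ such that $t_i$ divides $t_{i+1}$ for $1\le i\le r-1$. Let $\mathcal{F}=(\mathbb{F}_{q^{t_1}},\ldots,\mathbb{F}_{q^{t_r}})$ be the Galois flag of this type on $\mathbb{F}_{q^n}$ and let $\beta\in\mathbb{F}_{q^n}^*$. For each $1\le i\le r$, let $\beta_i$ be a generator of the cyclic group $\langle\beta\rangle\cap\mathbb{F}_{q^{t_i}}^*$ (which equals the stabilizer of $\mathbb{F}_{q^{t_i}}$ in $\langle\beta\rangle$). Then: (1) for each $1\le i\le r$, $\mathrm{Orb}_\beta(\mathbb{F}_{q^{t_i}})$ is a partial spread of dimension $t_i$ of $\mathbb{F}_{q^n}$; (2) for every $1\le i<j\le r$ and every $0\le l\le|\beta_j|-1$, the $\beta_j$-cyclic orbit code $\mathrm{Orb}_{\beta_j}(\mathbb{F}_{q^{t_i}}\beta^l)$ is a partial spread of dimension $t_i$ of the subspace $\mathbb{F}_{q^{t_j}}\beta^l$.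
   Context: $\mathbb{F}_{q^n}$ is regarded as an $\mathbb{F}_q$-vector space. For $\gamma\in\mathbb{F}_{q^n}^*$ and an $\mathbb{F}_q$-subspace $\mathcal{U}$, $\mathcal{U}\gamma=\{u\gamma:u\in\mathcal{U}\}$. For $\beta\in\mathbb{F}_{q^n}^*$ of multiplicative order $|\beta|$, $\mathrm{Orb}_\beta(\mathcal{U})=\{\mathcal{U}\beta^j:0\le j\le|\beta|-1\}$. A partial spread of dimension $t$ of an $\mathbb{F}_q$-subspace $\mathcal{W}$ is a set of $t$-dimensional $\mathbb{F}_q$-subspaces of $\mathcal{W}$ that pairwise intersect in $\{0\}$. *)

theory Defs
  imports "HOL-Computational_Algebra.Primes"
begin

text \<open>The ambient field F_{q^n} is a finite field type 'a of cardinality q^n.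
 Its subfield F_{q^t} (for t dividing n) is the set of roots of x^(q^t) - x.\<close>

definition subfld :: "nat \<Rightarrow> nat \<Rightarrow> 'a::field set" where
  "subfld q t = {x. x ^ (q ^ t) = x}"

definition prime_power :: "nat \<Rightarrow> bool" where
  "prime_power q \<longleftrightarrow> (\<exists>p k. prime p \<and> k > 0 \<and> q = p ^ k)"

definition smul_set :: "'a::field set \<Rightarrow> 'a \<Rightarrow> 'a set" where
  "smul_set U g = (\<lambda>u. u * g) ` U"

definition mord :: "'a::field \<Rightarrow> nat" where
  "mord b = (LEAST k. k > 0 \<and> b ^ k = 1)"

definition cyc :: "'a::field \<Rightarrow> 'a set" where
  "cyc b = {b ^ k | k. True}"

definition Orb :: "'a::field \<Rightarrow> 'a set \<Rightarrow> 'a set set" where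
  "Orb b U = {smul_set U (b ^ j) | j. j \<le> mord b - 1}"

definition Fq_subspace :: "nat \<Rightarrow> 'a::field set \<Rightarrow> bool" where
  "Fq_subspace q U \<longleftrightarrow> 0 \<in> U \<and> (\<forall>x\<in>U. \<forall>y\<in>U. x + y \<in> U)
     \<and> (\<forall>c\<in>subfld q 1. \<forall>x\<in>U. c * x \<in> U)"

definition Fq_dim :: "nat \<Rightarrow> 'a::field set \<Rightarrow> nat \<Rightarrow> bool" where
  "Fq_dim q U t \<longleftrightarrow> Fq_subspace q U \<and>
     (\<exists>f :: nat \<Rightarrow> 'a. (\<forall>i<t. f i \<in> U)
        \<and> U = {(\<Sum>i<t. c i * f i) | c. \<forall>i<t. c i \<in> subfld q 1}
        \<and> (\<forall>c. (\<forall>i<t. c i \<in> subfld q 1) \<and> (\<Sum>i<t. c i * f i) = 0 \<longrightarrow> (\<forall>i<t. c i = 0)))"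

definition partial_spread :: "nat \<Rightarrow> 'a::field set set \<Rightarrow> nat \<Rightarrow> 'a set \<Rightarrow> bool" where
  "partial_spread q S t W \<longleftrightarrow>
     (\<forall>U\<in>S. Fq_dim q U t \<and> U \<subseteq> W) \<and>
     (\<forall>U\<in>S. \<forall>V\<in>S. U \<noteq> V \<longrightarrow> U \<inter> V = {0})"

end

theory Submission
  imports Defs "HOL-Library.FuncSet" "HOL-Computational_Algebra.Polynomial"
begin

(* F_{q^t} = {x. x^(q^t) = x} is the fixed set of a power of the Frobenius, hence a subfield.
   When t divides n it has exactly q^t elements: at most q^t as the roots of X^(q^t) - X, and at
   least q^t because phi x = x^(q^t) - x is additive with kernel F_{q^t}, while telescoping shows
   that its image consists of roots of the sum of the Y^(q^(t j)) for j < n/t, a polynomial of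
   degree q^(n-t). Counting linear combinations then yields an F_q-basis of length t.
   Nonzero multiples F g of a subfield F are cosets of the multiplicative group of F, so two of
   them coincide or meet only in 0, and multiplication by g preserves F_q-dimension; hence every
   family of such multiples is a partial spread. For part (2), beta_j lies in
   F_{q^(t_j)}, which contains F_{q^(t_i)}, so F_{q^(t_i)} beta^l beta_j^m lies in
   F_{q^(t_j)} beta^l. *)

(* The library's finite_field_power_card_eq_same needs the class finite_field, which the sort
   {field,finite} does not provide syntactically. *)
lemma power_card_UNIV_eq_self:
  fixes x :: "'a::{field,finite}"
  shows "x ^ card (UNIV :: 'a set) = x"
proof (cases "x = 0")
  case True
  then show ?thesis by (simp add: finite_UNIV_card_ge_0)
next
  case False
  let ?U = "UNIV - {0::'a}"
  have "(\<Prod>y\<in>?U. y) = (\<Prod>y\<in>?U. x * y)"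
    by (rule prod.reindex_bij_witness[of _ "\<lambda>y. x * y" "\<lambda>y. y / x"]) (use False in auto)
  also have "\<dots> = x ^ card ?U * (\<Prod>y\<in>?U. y)"
    by (simp add: prod.distrib)
  finally have "x ^ card ?U = 1"
    by simp
  moreover have "card (UNIV :: 'a set) = Suc (card ?U)"
    by (simp add: card_Diff_singleton finite_UNIV_card_ge_0)
  ultimately show ?thesis
    by (simp only: power_Suc2 mult_1_left)
qed

lemma of_nat_card_UNIV_eq_0: "of_nat (card (UNIV :: 'a::{ring_1,finite} set)) = (0::'a)"
proof -
  have "(\<Sum>y\<in>(UNIV::'a set). 1 + y) = (\<Sum>y\<in>UNIV. y)"
    by (rule sum.reindex_bij_witness[of _ "\<lambda>y. y - 1" "\<lambda>y. 1 + y"]) auto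
  then show ?thesis by (simp add: sum.distrib)
qed

lemma prime_CHAR_finite_field: "prime CHAR('a::{field,finite})"
  by (simp add: finite_imp_CHAR_pos prime_CHAR_semidom)

lemma card_UNIV_field_gt_1: "1 < card (UNIV :: 'a::{field,finite} set)"
proof -
  have "card {0::'a, 1} \<le> card (UNIV :: 'a set)"
    by (rule card_mono) auto
  then show ?thesis by simp
qed

lemma prime_power_card_UNIV_imp_CHAR_power:
  assumes "prime_power q" and "card (UNIV :: 'a::{field,finite} set) = q ^ n"
  obtains k where "k > 0" and "q = CHAR('a) ^ k"
proof -
  obtain p k where p: "prime p" "k > 0" "q = p ^ k"
    using assms(1) unfolding prime_power_def by blast
  have "of_nat (p ^ (k * n)) = (0::'a)"
    using of_nat_card_UNIV_eq_0[where 'a = 'a] assms(2) p(3) by (simp add: power_mult)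
  then have "CHAR('a) dvd p ^ (k * n)"
    by (simp only: of_nat_eq_0_iff_char_dvd)
  then have "CHAR('a) = p"
    using prime_CHAR_finite_field[where 'a = 'a] p(1)
    by (metis prime_dvd_power primes_dvd_imp_eq)
  then show ?thesis using that p by blast
qed

definition is_subfield :: "'a::field set \<Rightarrow> bool" where
  "is_subfield K \<longleftrightarrow> 0 \<in> K \<and> 1 \<in> K \<and> (\<forall>a\<in>K. \<forall>b\<in>K. a + b \<in> K \<and> a * b \<in> K)
     \<and> (\<forall>a\<in>K. -a \<in> K \<and> inverse a \<in> K)"

lemma is_subfield_power:
  assumes "is_subfield K" and "c \<in> K"
  shows "c ^ m \<in> K"
  using assms by (induction m) (auto simp: is_subfield_def)

lemma is_subfield_diff:
  assumes "is_subfield K" and "a \<in> K" and "b \<in> K"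
  shows "a - b \<in> K"
  using assms unfolding is_subfield_def by (metis diff_conv_add_uminus)

lemma subfld_eq_Frobenius_fixed_points:
  assumes "q = CHAR('a::field) ^ k"
  shows "subfld q t = {x::'a. x ^ (CHAR('a) ^ (k * t)) = x}"
  using assms by (simp add: subfld_def power_mult)

lemma freshmans_dream_diff:
  assumes "prime CHAR('a::comm_ring_1)" and "Q = CHAR('a) ^ m"
  shows "(x - y :: 'a) ^ Q = x ^ Q - y ^ Q"
  using freshmans_dream'[OF assms, of "x - y" y] by (simp add: eq_diff_eq)

lemma is_subfield_Frobenius_fixed_points:
  assumes "prime CHAR('a::field)"
  shows "is_subfield {x::'a. x ^ (CHAR('a) ^ m) = x}"
proof -
  let ?Q = "CHAR('a) ^ m"
  have Q: "?Q > 0"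
    using assms prime_gt_0_nat by simp
  have "(0 - x) ^ ?Q = 0 ^ ?Q - x ^ ?Q" for x :: 'a
    using freshmans_dream_diff[OF assms refl] .
  then have neg: "(- x) ^ ?Q = - (x ^ ?Q)" for x :: 'a
    using Q by simp
  show ?thesis
    unfolding is_subfield_def
    using Q by (simp add: freshmans_dream'[OF assms refl] neg power_mult_distrib power_inverse)
qed

lemma is_subfield_subfld:
  assumes "q = CHAR('a::field) ^ k" and "prime CHAR('a)"
  shows "is_subfield (subfld q t :: 'a set)"
  using is_subfield_Frobenius_fixed_points[OF assms(2)]
  by (simp add: subfld_eq_Frobenius_fixed_points[OF assms(1)])

lemma subfld_mono:
  assumes "a dvd b"
  shows "subfld q a \<subseteq> (subfld q b :: 'a::field set)"
proof
  fix x :: 'a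
  assume x: "x \<in> subfld q a"
  obtain m where b: "b = a * m"
    using assms by blast
  have "x ^ (q ^ (a * j)) = x" for j
  proof (induction j)
    case (Suc j)
    have "x ^ (q ^ (a * Suc j)) = (x ^ (q ^ a)) ^ (q ^ (a * j))"
      by (simp add: power_add power_mult[symmetric] mult.commute)
    with x Suc show ?case
      by (simp add: subfld_def)
  qed simp
  with b show "x \<in> subfld q b"
    by (simp add: subfld_def)
qed

lemma card_UNIV_eq_card_range_mult_card_kernel:
  fixes f :: "'a::{ab_group_add,finite} \<Rightarrow> 'b::ab_group_add"
  assumes "additive f"
  shows "card (UNIV :: 'a set) = card (range f) * card {x. f x = 0}"
proof -
  interpret additive f by fact
  have fiber: "f -` {f x} = (+) x ` {z. f z = 0}" for x
  proof -
    have "z \<in> (+) x ` {z. f z = 0}" if "f z = f x" for z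
      using that by (intro image_eqI[of _ _ "z - x"]) (simp_all add: diff)
    then show ?thesis by (auto simp: add)
  qed
  have card_fiber: "card (f -` {y}) = card {x. f x = 0}" if "y \<in> range f" for y
    using that fiber by (auto simp: card_image)
  have "card (UNIV :: 'a set) = card (\<Union>y\<in>range f. f -` {y})"
    by (rule arg_cong[of _ _ card]) blast
  also have "\<dots> = (\<Sum>y\<in>range f. card (f -` {y}))"
    by (rule card_UN_disjoint) auto
  also have "\<dots> = card (range f) * card {x. f x = 0}"
    by (simp add: card_fiber)
  finally show ?thesis .
qed

lemma card_power_fixed_points_le:
  assumes "Q \<ge> 2"
  shows "card {x::'a::idom. x ^ Q = x} \<le> Q"
proof -
  define P :: "'a poly" where "P = monom 1 Q - monom 1 1"
  have "coeff P Q = 1"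
    using assms by (simp add: P_def)
  then have "P \<noteq> 0" by auto
  moreover have "degree P \<le> Q"
    using assms by (intro degree_le) (auto simp: P_def)
  moreover have "{x. x ^ Q = x} = {x. poly P x = 0}"
    by (simp add: P_def poly_monom)
  ultimately show ?thesis
    using card_poly_roots_bound[of P] by simp
qed

lemma card_roots_sum_powers_le:
  assumes "Q \<ge> 2" and "d > 0"
  shows "card {y::'a::idom. (\<Sum>j<d. y ^ (Q ^ j)) = 0} \<le> Q ^ (d - 1)"
proof -
  define P :: "'a poly" where "P = (\<Sum>j<d. monom 1 (Q ^ j))"
  have coeff_P: "coeff P i = (\<Sum>j<d. if Q ^ j = i then 1 else 0)" for i
    by (simp add: P_def coeff_sum)
  have "coeff P (Q ^ (d - 1)) = (\<Sum>j<d. if j = d - 1 then 1 else 0)"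
    unfolding coeff_P using assms(1) by (intro sum.cong) auto
  then have "P \<noteq> 0"
    using assms(2) by auto
  moreover have "degree P \<le> Q ^ (d - 1)"
  proof (rule degree_le, intro allI impI)
    fix i
    assume "Q ^ (d - 1) < i"
    moreover have "Q ^ j \<le> Q ^ (d - 1)" if "j < d" for j
      using assms(1) that by (intro power_increasing) auto
    ultimately show "coeff P i = 0"
      unfolding coeff_P by (intro sum.neutral) (auto dest: leD)
  qed
  moreover have "{y. (\<Sum>j<d. y ^ (Q ^ j)) = 0} = {y. poly P y = 0}"
    by (simp add: P_def poly_sum poly_monom)
  ultimately show ?thesis
    using card_poly_roots_bound[of P] by simp
qed

lemma card_Frobenius_fixed_points:
  assumes card: "card (UNIV :: 'a::{field,finite} set) = Q ^ d"
    and Q: "Q = CHAR('a) ^ m" and "m > 0"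
  shows "card {x::'a. x ^ Q = x} = Q"
proof -
  let ?F = "{x::'a. x ^ Q = x}"
  have "CHAR('a) ^ 1 \<le> Q"
    unfolding Q using \<open>m > 0\<close> prime_CHAR_finite_field[where 'a = 'a]
    by (intro power_increasing) (auto simp: prime_gt_Suc_0_nat less_imp_le)
  moreover have "CHAR('a) \<ge> 2"
    using prime_CHAR_finite_field prime_ge_2_nat by blast
  ultimately have Q2: "Q \<ge> 2" by simp
  have "d > 0"
    using card_UNIV_field_gt_1[where 'a = 'a] card by (cases d) auto
  define \<phi> where "\<phi> x = x ^ Q - x" for x :: 'a
  have frob_diff: "(x - y) ^ (Q ^ j) = x ^ (Q ^ j) - y ^ (Q ^ j)" for x y :: 'a and j
    using freshmans_dream_diff[OF prime_CHAR_finite_field[where 'a = 'a], of "Q ^ j" "m * j"] Q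
    by (simp add: power_mult)
  have "additive \<phi>"
    by unfold_locales
      (simp add: \<phi>_def freshmans_dream'[OF prime_CHAR_finite_field Q])
  have "range \<phi> \<subseteq> {y. (\<Sum>j<d. y ^ (Q ^ j)) = 0}"
  proof clarify
    fix x :: 'a
    have "(\<Sum>j<d. \<phi> x ^ (Q ^ j)) = (\<Sum>j<d. x ^ (Q ^ Suc j) - x ^ (Q ^ j))"
      by (simp add: \<phi>_def frob_diff power_mult[symmetric] mult.commute)
    also have "\<dots> = x ^ (Q ^ d) - x"
      using sum_lessThan_telescope[of "\<lambda>j. x ^ (Q ^ j)" d] by simp
    also have "\<dots> = 0"
      using power_card_UNIV_eq_self[of x] card by simp
    finally show "(\<Sum>j<d. \<phi> x ^ (Q ^ j)) = 0" .
  qed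
  then have "card (range \<phi>) \<le> Q ^ (d - 1)"
    using card_roots_sum_powers_le[OF Q2 \<open>d > 0\<close>, where 'a = 'a]
    by (meson card_mono finite le_trans)
  moreover have "Q ^ d = card (range \<phi>) * card ?F"
    using card_UNIV_eq_card_range_mult_card_kernel[OF \<open>additive \<phi>\<close>] card
    by (simp add: \<phi>_def)
  moreover have "Q ^ d = Q * Q ^ (d - 1)"
    using \<open>d > 0\<close> by (simp add: power_eq_if)
  ultimately have "Q * Q ^ (d - 1) \<le> Q ^ (d - 1) * card ?F"
    by (metis mult_le_mono1)
  then have "Q \<le> card ?F"
    using Q2 by (simp add: mult.commute)
  with card_power_fixed_points_le[OF Q2, where 'a = 'a] show ?thesis
    by linarith
qed

lemma card_subfld:
  assumes card: "card (UNIV :: 'a::{field,finite} set) = q ^ n"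
    and q: "q = CHAR('a) ^ k" "k > 0" and "t dvd n"
  shows "card (subfld q t :: 'a set) = q ^ t"
proof -
  obtain d where n: "n = t * d"
    using \<open>t dvd n\<close> by blast
  have "t > 0"
    using card_UNIV_field_gt_1[where 'a = 'a] card n by (cases t) auto
  have "card (UNIV :: 'a set) = (q ^ t) ^ d"
    using card n by (simp add: power_mult)
  moreover have "q ^ t = CHAR('a) ^ (k * t)"
    using q by (simp add: power_mult)
  ultimately have "card {x::'a. x ^ (q ^ t) = x} = q ^ t"
    using card_Frobenius_fixed_points[where 'a = 'a, of "q ^ t" d "k * t"] q(2) \<open>t > 0\<close> by simp
  then show ?thesis
    by (simp add: subfld_def)
qed

definition span_over :: "'a::field set \<Rightarrow> nat \<Rightarrow> (nat \<Rightarrow> 'a) \<Rightarrow> 'a set" where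
  "span_over K m f = {(\<Sum>i<m. c i * f i) | c. \<forall>i<m. c i \<in> K}"

definition independent_over :: "'a::field set \<Rightarrow> nat \<Rightarrow> (nat \<Rightarrow> 'a) \<Rightarrow> bool" where
  "independent_over K m f \<longleftrightarrow>
     (\<forall>c. (\<forall>i<m. c i \<in> K) \<and> (\<Sum>i<m. c i * f i) = 0 \<longrightarrow> (\<forall>i<m. c i = 0))"

definition subspace_over :: "'a::field set \<Rightarrow> 'a set \<Rightarrow> bool" where
  "subspace_over K V \<longleftrightarrow> 0 \<in> V \<and> (\<forall>x\<in>V. \<forall>y\<in>V. x + y \<in> V) \<and> (\<forall>c\<in>K. \<forall>x\<in>V. c * x \<in> V)"

definition dim_over :: "'a::field set \<Rightarrow> 'a set \<Rightarrow> nat \<Rightarrow> bool" where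
  "dim_over K V t \<longleftrightarrow> subspace_over K V \<and>
     (\<exists>f. (\<forall>i<t. f i \<in> V) \<and> V = span_over K t f \<and> independent_over K t f)"

lemma Fq_dim_eq_dim_over: "Fq_dim q U t \<longleftrightarrow> dim_over (subfld q 1) U t"
  unfolding Fq_dim_def dim_over_def Fq_subspace_def subspace_over_def span_over_def
    independent_over_def ..

lemma span_over_subset:
  assumes "subspace_over K V" and "\<forall>i<m. f i \<in> V"
  shows "span_over K m f \<subseteq> V"
proof -
  have "(\<Sum>i<m. c i * f i) \<in> V" if "\<forall>i<m. c i \<in> K" for c
    using assms(2) that
    by (induction m) (use assms(1) in \<open>simp_all add: subspace_over_def\<close>)
  then show ?thesis
    unfolding span_over_def by blast
qed

lemma card_span_over:
  assumes K: "is_subfield K" and "finite K" and ind: "independent_over K m f"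
  shows "card (span_over K m f) = card K ^ m"
proof -
  let ?comb = "\<lambda>c. \<Sum>i<m. c i * f i"
  have "span_over K m f = ?comb ` ({..<m} \<rightarrow>\<^sub>E K)"
  proof (intro equalityI subsetI)
    fix x
    assume "x \<in> span_over K m f"
    then obtain c where c: "\<forall>i<m. c i \<in> K" "x = ?comb c"
      unfolding span_over_def by blast
    moreover have "restrict c {..<m} \<in> {..<m} \<rightarrow>\<^sub>E K"
      using c(1) by simp
    ultimately show "x \<in> ?comb ` ({..<m} \<rightarrow>\<^sub>E K)"
      by (intro image_eqI[where x = "restrict c {..<m}"]) simp_all
  next
    fix x
    assume "x \<in> ?comb ` ({..<m} \<rightarrow>\<^sub>E K)"
    then obtain c where "c \<in> {..<m} \<rightarrow>\<^sub>E K" "x = ?comb c"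
      by blast
    then show "x \<in> span_over K m f"
      unfolding span_over_def by (intro CollectI exI[of _ c]) auto
  qed
  moreover have "inj_on ?comb ({..<m} \<rightarrow>\<^sub>E K)"
  proof (rule inj_onI)
    fix c d
    assume c: "c \<in> {..<m} \<rightarrow>\<^sub>E K" and d: "d \<in> {..<m} \<rightarrow>\<^sub>E K" and "?comb c = ?comb d"
    then have "(\<Sum>i<m. (c i - d i) * f i) = 0"
      by (simp add: left_diff_distrib sum_subtractf)
    moreover have "\<forall>i<m. c i - d i \<in> K"
      using c d is_subfield_diff[OF K] by auto
    ultimately have "\<forall>i<m. c i - d i = 0"
      using spec[OF ind[unfolded independent_over_def], of "\<lambda>i. c i - d i"] by blast
    with c d show "c = d"
      by (intro PiE_ext) auto
  qed
  ultimately show ?thesis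
    using \<open>finite K\<close> by (simp add: card_image card_PiE)
qed

lemma independent_over_extend:
  assumes K: "is_subfield K" and ind: "independent_over K m f" and v: "v \<notin> span_over K m f"
  shows "independent_over K (Suc m) (f(m := v))"
  unfolding independent_over_def
proof (rule allI, rule impI)
  fix c
  assume c: "(\<forall>i<Suc m. c i \<in> K) \<and> (\<Sum>i<Suc m. c i * (f(m := v)) i) = 0"
  then have sum: "(\<Sum>i<m. c i * f i) + c m * v = 0"
    by simp
  have "c m = 0"
  proof (rule ccontr)
    assume "c m \<noteq> 0"
    have "c m * v = - (\<Sum>i<m. c i * f i)"
      using sum by (simp add: eq_neg_iff_add_eq_0 add.commute)
    have "v = inverse (c m) * (c m * v)"
      using \<open>c m \<noteq> 0\<close> by simp
    also have "\<dots> = - inverse (c m) * (\<Sum>i<m. c i * f i)"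
      by (simp add: \<open>c m * v = - (\<Sum>i<m. c i * f i)\<close>)
    finally have "v = (\<Sum>i<m. (- inverse (c m) * c i) * f i)"
      by (simp add: sum_distrib_left mult.assoc)
    moreover have "\<forall>i<m. - inverse (c m) * c i \<in> K"
      using c K by (auto simp: is_subfield_def)
    ultimately have "v \<in> span_over K m f"
      unfolding span_over_def by (intro CollectI exI[of _ "\<lambda>i. - inverse (c m) * c i"]) simp
    with v show False ..
  qed
  with sum c ind have "\<forall>i<m. c i = 0"
    unfolding independent_over_def by simp
  with \<open>c m = 0\<close> show "\<forall>i<Suc m. c i = 0"
    by (simp add: less_Suc_eq)
qed

lemma exists_independent_over:
  assumes K: "is_subfield K" "finite K" and V: "subspace_over K V" "finite V"
    and "card K ^ m \<le> card V"
  shows "\<exists>f. (\<forall>i<m. f i \<in> V) \<and> independent_over K m f"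
  using assms(5)
proof (induction m)
  case 0
  then show ?case by (simp add: independent_over_def)
next
  case (Suc m)
  have "card {0::'a, 1} \<le> card K"
    using K by (intro card_mono) (auto simp: is_subfield_def)
  then have "card K ^ m < card K ^ Suc m"
    by simp
  with Suc.prems have "card K ^ m \<le> card V"
    by linarith
  then obtain f where f: "\<forall>i<m. f i \<in> V" "independent_over K m f"
    using Suc.IH by blast
  have "card (span_over K m f) < card V"
    using card_span_over[OF K f(2)] \<open>card K ^ m < card K ^ Suc m\<close> Suc.prems by linarith
  then have "span_over K m f \<noteq> V"
    by auto
  with span_over_subset[OF V(1) f(1)] obtain v where v: "v \<in> V" "v \<notin> span_over K m f"
    by blast
  then have "\<forall>i<Suc m. (f(m := v)) i \<in> V"
    using f(1) by (simp add: less_Suc_eq)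
  with independent_over_extend[OF K(1) f(2) v(2)] show ?case
    by blast
qed

lemma dim_over_of_card:
  assumes K: "is_subfield K" "finite K" and V: "subspace_over K V" "finite V"
    and card: "card V = card K ^ t"
  shows "dim_over K V t"
proof -
  obtain f where f: "\<forall>i<t. f i \<in> V" "independent_over K t f"
    using exists_independent_over[OF K V] card by auto
  have "span_over K t f = V"
    using span_over_subset[OF V(1) f(1)] card_span_over[OF K f(2)] card V(2)
    by (simp add: card_subset_eq)
  with V(1) f show ?thesis
    unfolding dim_over_def by auto
qed

lemma smul_set_smul_set: "smul_set (smul_set U a) b = smul_set U (a * b)"
  unfolding smul_set_def by (auto simp: image_image mult.assoc)

lemma subspace_over_smul_set:
  assumes "subspace_over K U"
  shows "subspace_over K (smul_set U g)"
  unfolding subspace_over_def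
proof (intro conjI ballI)
  show "0 \<in> smul_set U g"
    using assms by (force simp: subspace_over_def smul_set_def)
next
  fix x y
  assume "x \<in> smul_set U g" "y \<in> smul_set U g"
  then obtain u v where "u \<in> U" "v \<in> U" "x = u * g" "y = v * g"
    unfolding smul_set_def by blast
  with assms show "x + y \<in> smul_set U g"
    unfolding subspace_over_def smul_set_def by (intro image_eqI[of _ _ "u + v"]) (auto simp: distrib_right)
next
  fix c x
  assume "c \<in> K" "x \<in> smul_set U g"
  then obtain u where "u \<in> U" "x = u * g"
    unfolding smul_set_def by blast
  with assms \<open>c \<in> K\<close> show "c * x \<in> smul_set U g"
    unfolding subspace_over_def smul_set_def by (intro image_eqI[of _ _ "c * u"]) (auto simp: mult.assoc)
qed

lemma span_over_mult_right: "span_over K m (\<lambda>i. f i * g) = smul_set (span_over K m f) g"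
proof -
  have "(\<Sum>i<m. c i * (f i * g)) = (\<Sum>i<m. c i * f i) * g" for c
    by (simp add: sum_distrib_right mult.assoc)
  then show ?thesis
    unfolding span_over_def smul_set_def by auto
qed

lemma independent_over_mult_right:
  assumes "independent_over K m f" and "g \<noteq> 0"
  shows "independent_over K m (\<lambda>i. f i * g)"
  using assms by (simp add: independent_over_def sum_distrib_right[symmetric] mult.assoc[symmetric])

lemma dim_over_smul_set:
  assumes "dim_over K U t" and "g \<noteq> 0"
  shows "dim_over K (smul_set U g) t"
proof -
  obtain f where f: "\<forall>i<t. f i \<in> U" "U = span_over K t f" "independent_over K t f"
    using assms(1) unfolding dim_over_def by blast
  have "\<forall>i<t. f i * g \<in> smul_set U g"
    using f(1) by (auto simp: smul_set_def)
  with assms f show ?thesis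
    unfolding dim_over_def
    by (auto simp: subspace_over_smul_set span_over_mult_right independent_over_mult_right)
qed

lemma Fq_dim_subfld:
  assumes card: "card (UNIV :: 'a::{field,finite} set) = q ^ n"
    and q: "q = CHAR('a) ^ k" "k > 0" and "t dvd n"
  shows "Fq_dim q (subfld q t :: 'a set) t"
proof -
  have subfield: "is_subfield (subfld q s :: 'a set)" for s
    using is_subfield_subfld[OF q(1) prime_CHAR_finite_field] .
  have "subfld q 1 \<subseteq> (subfld q t :: 'a set)"
    by (rule subfld_mono) simp
  with subfield have "subspace_over (subfld q 1) (subfld q t :: 'a set)"
    unfolding subspace_over_def is_subfield_def by blast
  moreover have "card (subfld q t :: 'a set) = card (subfld q 1 :: 'a set) ^ t"
    using card_subfld[OF card q] card_subfld[OF card q, of 1] \<open>t dvd n\<close> by simp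
  ultimately show ?thesis
    unfolding Fq_dim_eq_dim_over by (intro dim_over_of_card subfield) simp_all
qed

lemma smul_set_subfield_self:
  assumes F: "is_subfield F" and "c \<in> F" and "c \<noteq> 0"
  shows "smul_set F c = F"
proof
  show "smul_set F c \<subseteq> F"
    using assms unfolding smul_set_def is_subfield_def by auto
  show "F \<subseteq> smul_set F c"
  proof
    fix x
    assume "x \<in> F"
    then have "x * inverse c \<in> F"
      using assms unfolding is_subfield_def by auto
    moreover have "x = (x * inverse c) * c"
      using \<open>c \<noteq> 0\<close> by (simp add: mult.assoc)
    ultimately show "x \<in> smul_set F c"
      unfolding smul_set_def by blast
  qed
qed

lemma smul_set_subfield_disjoint:
  assumes F: "is_subfield F" and "a \<noteq> 0" and "b \<noteq> 0" and ne: "smul_set F a \<noteq> smul_set F b"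
  shows "smul_set F a \<inter> smul_set F b = {0}"
proof (rule ccontr)
  assume "smul_set F a \<inter> smul_set F b \<noteq> {0}"
  moreover have "0 \<in> smul_set F a \<inter> smul_set F b"
    using F unfolding smul_set_def is_subfield_def by force
  ultimately obtain u v where u: "u \<in> F" "u \<noteq> 0" and v: "v \<in> F" "v \<noteq> 0" and "u * a = v * b"
    unfolding smul_set_def by fastforce
  then have "a = (v * inverse u) * b"
    by (simp add: field_simps)
  moreover have "v * inverse u \<in> F" "v * inverse u \<noteq> 0"
    using F u v unfolding is_subfield_def by auto
  ultimately have "smul_set F a = smul_set (smul_set F (v * inverse u)) b"
    by (simp add: smul_set_smul_set)
  also have "\<dots> = smul_set F b"
    using smul_set_subfield_self[OF F] \<open>v * inverse u \<in> F\<close> \<open>v * inverse u \<noteq> 0\<close> by simp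
  finally have "smul_set F a = smul_set F b" .
  with ne show False ..
qed

lemma partial_spread_smul_set_image:
  assumes F: "is_subfield F" "Fq_dim q F t"
    and g: "\<And>j. j \<in> J \<Longrightarrow> g j \<noteq> 0 \<and> smul_set F (g j) \<subseteq> W"
  shows "partial_spread q ((\<lambda>j. smul_set F (g j)) ` J) t W"
  unfolding partial_spread_def
  using g smul_set_subfield_disjoint[OF F(1)] dim_over_smul_set[of "subfld q 1" F t] F(2)
  by (auto simp: Fq_dim_eq_dim_over)

lemma Orb_eq_image: "Orb b U = (\<lambda>j. smul_set U (b ^ j)) ` {..mord b - 1}"
  unfolding Orb_def by auto

lemma partial_spread_Orb:
  assumes "is_subfield F" and "Fq_dim q F t" and "b \<noteq> 0"
  shows "partial_spread q (Orb b F) t UNIV"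
  unfolding Orb_eq_image using assms(3)
  by (intro partial_spread_smul_set_image[OF assms(1,2)]) simp

lemma partial_spread_Orb_smul_set:
  assumes F: "is_subfield F" "Fq_dim q F t" and E: "is_subfield E" "F \<subseteq> E"
    and b: "b \<in> E" "b \<noteq> 0" and "g \<noteq> 0"
  shows "partial_spread q (Orb b (smul_set F g)) t (smul_set E g)"
proof -
  have "smul_set F (g * b ^ m) \<subseteq> smul_set E g" for m
  proof -
    have "smul_set F (b ^ m) \<subseteq> smul_set E (b ^ m)"
      unfolding smul_set_def using E(2) by (rule image_mono)
    also have "\<dots> = E"
      using smul_set_subfield_self[OF E(1) is_subfield_power[OF E(1) b(1)]] b(2) by simp
    finally have "smul_set (smul_set F (b ^ m)) g \<subseteq> smul_set E g"
      unfolding smul_set_def by (rule image_mono)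
    then show ?thesis
      by (simp add: smul_set_smul_set mult.commute)
  qed
  with b(2) \<open>g \<noteq> 0\<close> show ?thesis
    unfolding Orb_eq_image smul_set_smul_set
    by (intro partial_spread_smul_set_image[OF F]) simp
qed

lemma dvd_chain_trans:
  fixes t :: "nat \<Rightarrow> 'a::comm_monoid_mult"
  assumes "\<And>k. i \<le> k \<Longrightarrow> k < j \<Longrightarrow> t k dvd t (Suc k)" and "i \<le> j"
  shows "t i dvd t j"
  using assms(2)
  by (rule dec_induct[where P = "\<lambda>n. t i dvd t n"]) (auto intro: dvd_trans assms(1))

theorem corollary4p13:
  fixes q n r :: nat and t :: "nat \<Rightarrow> nat" and \<beta> :: "'a::{field,finite}"
    and \<beta>s :: "nat \<Rightarrow> 'a"
  assumes "prime_power q"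
    and "card (UNIV :: 'a set) = q ^ n"
    and "1 \<le> t 1"
    and "\<forall>i. 1 \<le> i \<and> i < r \<longrightarrow> t i < t (i + 1) \<and> t i dvd t (i + 1)"
    and "\<forall>i\<in>{1..r}. t i dvd n"
    and "t r < n"
    and "\<beta> \<noteq> 0"
    and "\<forall>i\<in>{1..r}. \<beta>s i \<in> cyc \<beta> \<inter> (subfld q (t i) - {0})
            \<and> cyc (\<beta>s i) = cyc \<beta> \<inter> (subfld q (t i) - {0})"
  shows "(\<forall>i\<in>{1..r}. partial_spread q (Orb \<beta> (subfld q (t i))) (t i) UNIV)
    \<and> (\<forall>i j l. 1 \<le> i \<and> i < j \<and> j \<le> r \<and> l \<le> mord (\<beta>s j) - 1 \<longrightarrow>
          partial_spread q (Orb (\<beta>s j) (smul_set (subfld q (t i)) (\<beta> ^ l))) (t i)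
            (smul_set (subfld q (t j)) (\<beta> ^ l)))"
proof -
  obtain k where k: "q = CHAR('a) ^ k" "k > 0"
    using prime_power_card_UNIV_imp_CHAR_power[OF assms(1,2)] by metis
  have subfield: "is_subfield (subfld q s :: 'a set)" for s
    using is_subfield_subfld[OF k(1) prime_CHAR_finite_field] .
  have dim: "Fq_dim q (subfld q (t i) :: 'a set) (t i)" if "i \<in> {1..r}" for i
    using Fq_dim_subfld[OF assms(2) k] assms(5) that by blast
  have flag: "subfld q (t i) \<subseteq> (subfld q (t j) :: 'a set)" if "1 \<le> i" "i \<le> j" "j \<le> r" for i j
    using that assms(4) by (intro subfld_mono dvd_chain_trans[of i j t]) auto
  show ?thesis
    using assms(7,8)
    by (auto intro!: partial_spread_Orb[OF subfield dim]
        partial_spread_Orb_smul_set[OF subfield dim subfield flag])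
qed

end
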